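(* For each $b \geq 0$, define the optimisation objective \[ l_b(\rho) \defeq \frac{\frac{1}{e}(\rho^2 + b\rho + 1)}{\rho\, W_0\!\left(\frac{1}{e}(\rho^2 + b\rho + 1)\right)} \] over $\rho > \sqrt{2}$. The unique minimiser of $l_0$ is \[ \rho_0 \defeq \sqrt{1 + e^{W_0(2/e^2)+2}}. \] More generally, $l_b$ is uniquely minimised by the solution $\rho_b$ of the ordinary differential equation \[ \frac{d}{db}\rho_b = \frac{\rho_b^2}{(\rho_b^2+1)\log(\rho_b^2-1)} = \frac{\rho_b}{2\rho_b+b}\left(1 - \frac{2}{\rho_b^2 + 1}\right) > 0 \] with initial value $\rho_b\big|_{b=0} = \sqrt{1 + e^{W_0(2/e^2)+2}}$. Furthermore, the minimal value of $l_b$ satisfies \[ l_b(\rho_b) = \frac{\rho_b^2 - 1}{e \rho_b} < \frac{\rho_b}{e}. \]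
   Context: $W_0$ denotes the principal branch of the Lambert W function, i.e. for $z>-1/e$, $W_0(z)$ is the unique solution $w\in(-1,\infty)$ of $we^w=z$. *)

theory Defs
  imports "HOL-Analysis.Analysis"
begin

text \<open>Principal branch of the Lambert W function: for z > -1/e, the unique w > -1 with w e^w = z.\<close>
definition W0 :: "real \<Rightarrow> real" where
  "W0 z = (THE w. w > -1 \<and> w * exp w = z)"

definition lobj :: "real \<Rightarrow> real \<Rightarrow> real" where
  "lobj b \<rho> = ((\<rho>^2 + b*\<rho> + 1) / exp 1) / (\<rho> * W0 ((\<rho>^2 + b*\<rho> + 1) / exp 1))"

definition unique_min_above_sqrt2 :: "(real \<Rightarrow> real) \<Rightarrow> real \<Rightarrow> bool" where
  "unique_min_above_sqrt2 f r \<longleftrightarrow> r > sqrt 2 \<and> (\<forall>s. s > sqrt 2 \<and> s \<noteq> r \<longrightarrow> f r < f s)"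

definition rho0 :: real where
  "rho0 = sqrt (1 + exp (W0 (2 / (exp 1)^2) + 2))"

end

theory Submission
  imports Defs "HOL-Real_Asymp.Real_Asymp"
begin

text \<open>
  Since x / W0 x = exp (W0 x), the objective is l_b(s) = exp (W0 x) / s with x = (s^2 + b s + 1)/e. If b = critical_b rho, then
  x(rho) = (L - 1) e^(L - 1) with L = ln (rho^2 - 1), so W0 (x(rho)) = L - 1 and
  l_b(rho) = (rho^2 - 1)/(e rho). For s \<noteq> rho, put q = s/rho and t = (rho^2 - 1) q / e; then
  e (x(s) - t ln t) = (q - 1)(rho^2 q - 1) - (rho^2 - 1) q ln q > (q - 1)^2 because ln q < q - 1,
  hence ln t < W0 (x(s)) and l_b(s) > t / s = l_b(rho).

  On (sqrt 2, \<infinity>) critical_b has derivative (rho^2 + 1) ln (rho^2 - 1) / rho^2 > 0 and increases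
  from -2 sqrt 2 to \<infinity>, so its inverse rho_b is the minimiser of l_b for every b \<ge> 0 and, by the
  inverse function rule, solves the differential equation. Along any solution sigma the derivative
  of critical_b \<circ> sigma is 1, and critical_b rho_0 = 0 is the defining equation of W0 (2/e^2);
  hence critical_b (sigma b) = b, i.e. sigma = rho_b.
\<close>

lemma xexp_strict_mono:
  fixes a b :: real
  assumes "-1 \<le> a" "a < b"
  shows "a * exp a < b * exp b"
proof (rule DERIV_pos_imp_increasing_open[OF assms(2)])
  fix x assume "a < x" "x < b"
  with assms have "0 < (1 + x) * exp x" by simp
  moreover have "DERIV (\<lambda>w. w * exp w) x :> (1 + x) * exp x"
    by (auto intro!: derivative_eq_intros simp: distrib_right)
  ultimately
  show "\<exists>y. DERIV (\<lambda>w. w * exp w) x :> y \<and> 0 < y" by blast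
qed (intro continuous_intros)

lemma W0_of_xexp:
  assumes "-1 < w"
  shows "W0 (w * exp w) = w"
  unfolding W0_def
proof (rule the_equality)
  fix v assume "-1 < v \<and> v * exp v = w * exp w"
  with assms xexp_strict_mono[of v w] xexp_strict_mono[of w v] show "v = w"
    by (cases v w rule: linorder_cases) auto
qed (use assms in auto)

lemma
  fixes x :: real
  assumes "- exp (-1) < x"
  shows W0_gt_minus_one: "-1 < W0 x" and W0_times_exp: "W0 x * exp (W0 x) = x"
proof -
  have "x \<le> \<bar>x\<bar> * exp \<bar>x\<bar>"
    using mult_left_mono[of 1 "exp \<bar>x\<bar>" "\<bar>x\<bar>"] by simp
  moreover have "-1 * exp (-1) \<le> x" "-1 \<le> \<bar>x\<bar>" using assms by auto
  ultimately obtain w where "-1 \<le> w" "w * exp w = x"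
    using IVT[of "\<lambda>w. w * exp w" "-1" x "\<bar>x\<bar>"] by (auto intro!: continuous_intros)
  moreover from this assms have "w \<noteq> -1" by (auto simp: exp_minus field_simps)
  ultimately have "-1 < w" "W0 x = w" using W0_of_xexp by auto
  with \<open>w * exp w = x\<close> show "-1 < W0 x" "W0 x * exp (W0 x) = x" by simp_all
qed

lemma W0_pos:
  assumes "0 < x"
  shows "0 < W0 x"
proof -
  have "- exp (-1) < x" using assms exp_gt_zero[of "-1"] by linarith
  then have "0 < W0 x * exp (W0 x)" using W0_times_exp assms by simp
  then show ?thesis by (simp add: zero_less_mult_iff)
qed

lemma divide_W0_eq_exp:
  assumes "0 < x"
  shows "x / W0 x = exp (W0 x)"
proof -
  have "- exp (-1) < x" using assms exp_gt_zero[of "-1"] by linarith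
  with W0_pos[OF assms] show ?thesis
    using W0_times_exp[of x] by (metis nonzero_mult_div_cancel_left less_irrefl)
qed

lemma less_W0I:
  assumes "- exp (-1) < x" "c * exp c < x"
  shows "c < W0 x"
proof (cases "c \<le> -1")
  case True
  with W0_gt_minus_one[OF assms(1)] show ?thesis by linarith
next
  case False
  show ?thesis
  proof (rule ccontr)
    assume "\<not> c < W0 x"
    then have "x \<le> c * exp c"
      using W0_gt_minus_one[OF assms(1)] W0_times_exp[OF assms(1)] xexp_strict_mono[of "W0 x" c]
      by (cases "W0 x = c") auto
    with assms(2) show False by simp
  qed
qed

lemma one_less_sqrt2: "1 < sqrt (2::real)"
  by simp

lemma minus_two_sqrt2_less: "0 \<le> b \<Longrightarrow> - 2 * sqrt 2 < (b::real)"
  using one_less_sqrt2 by linarith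

lemma two_less_square_if_sqrt2_less: "sqrt 2 < (r::real) \<Longrightarrow> 2 < r\<^sup>2"
  using real_sqrt_less_iff[of 2 "r\<^sup>2"] abs_ge_self[of r] by simp

definition critical_b :: "real \<Rightarrow> real" where
  "critical_b r = ((r\<^sup>2 - 1) * ln (r\<^sup>2 - 1) - 2 * r\<^sup>2) / r"

lemma critical_b_times: "0 < r \<Longrightarrow> critical_b r * r = (r\<^sup>2 - 1) * ln (r\<^sup>2 - 1) - 2 * r\<^sup>2"
  by (simp add: critical_b_def)

lemma critical_b_sqrt2: "critical_b (sqrt 2) = - 2 * sqrt 2"
  by (simp add: critical_b_def field_simps)

lemma critical_b_has_derivative:
  assumes "1 < r"
  shows "(critical_b has_real_derivative (r\<^sup>2 + 1) * ln (r\<^sup>2 - 1) / r\<^sup>2) (at r)"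
proof -
  have "1 < r\<^sup>2" using assms by (simp add: one_less_power)
  then show ?thesis
    unfolding critical_b_def using assms
    by (auto intro!: derivative_eq_intros)
      (use less_1_mult[OF assms assms] in \<open>auto simp: field_simps power2_eq_square\<close>)
qed

lemma critical_b_derivative_pos: "sqrt 2 < r \<Longrightarrow> 0 < (r\<^sup>2 + 1) * ln (r\<^sup>2 - 1) / r\<^sup>2"
  using two_less_square_if_sqrt2_less[of r] by (intro divide_pos_pos mult_pos_pos) auto

lemma critical_b_strict_mono: "strict_mono_on {sqrt 2<..} critical_b"
proof (rule strict_mono_onI)
  fix a b assume ab: "a \<in> {sqrt 2<..}" "b \<in> {sqrt 2<..}" "a < b"
  have "isCont critical_b x" if "a \<le> x" "x \<le> b" for x
  proof -
    from that ab have "sqrt 2 < x" by simp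
    with one_less_sqrt2 have "1 < x" by linarith
    then show ?thesis by (rule DERIV_isCont[OF critical_b_has_derivative])
  qed
  then have "continuous_on {a..b} critical_b"
    by (simp add: continuous_at_imp_continuous_on)
  moreover have "\<exists>y. DERIV critical_b x :> y \<and> 0 < y" if "a < x" "x < b" for x
  proof -
    from that ab have "sqrt 2 < x" by simp
    moreover from this one_less_sqrt2 have "1 < x" by linarith
    ultimately show ?thesis
      using critical_b_has_derivative critical_b_derivative_pos by blast
  qed
  ultimately show "critical_b a < critical_b b"
    using DERIV_pos_imp_increasing_open[OF \<open>a < b\<close>] by blast
qed

lemma inj_on_critical_b: "inj_on critical_b {sqrt 2<..}"
  using critical_b_strict_mono strict_mono_on_imp_inj_on by blast

lemma critical_b_tendsto_at_top: "filterlim critical_b at_top at_top"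
  unfolding critical_b_def by real_asymp

lemma critical_b_surj:
  assumes "- 2 * sqrt 2 < b"
  shows "b \<in> critical_b ` {sqrt 2<..}"
proof -
  obtain R where R: "sqrt 2 \<le> R" "b \<le> critical_b R"
    using critical_b_tendsto_at_top
    unfolding filterlim_at_top eventually_at_top_linorder
    by (metis nle_le)
  have "isCont critical_b x" if "sqrt 2 \<le> x" for x
  proof -
    have "1 < x" using that one_less_sqrt2 by linarith
    then show ?thesis by (rule DERIV_isCont[OF critical_b_has_derivative])
  qed
  with R assms obtain r where r: "sqrt 2 \<le> r" "critical_b r = b"
    using IVT[of critical_b "sqrt 2" b R] critical_b_sqrt2 by auto
  with assms have "r \<noteq> sqrt 2" using critical_b_sqrt2 by auto
  with r show ?thesis by auto
qed

definition rho_opt :: "real \<Rightarrow> real" where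
  "rho_opt = the_inv_into {sqrt 2<..} critical_b"

lemma rho_opt_critical_b: "sqrt 2 < r \<Longrightarrow> rho_opt (critical_b r) = r"
  unfolding rho_opt_def using inj_on_critical_b by (simp add: the_inv_into_f_f)

lemma
  assumes "- 2 * sqrt 2 < b"
  shows rho_opt_gt_sqrt2: "sqrt 2 < rho_opt b" and critical_b_rho_opt: "critical_b (rho_opt b) = b"
  using the_inv_into_into[OF inj_on_critical_b critical_b_surj[OF assms] order_refl]
    f_the_inv_into_f[OF inj_on_critical_b critical_b_surj[OF assms]]
  by (simp_all add: rho_opt_def)

lemma rho_opt_has_derivative:
  assumes "- 2 * sqrt 2 < b"
  shows "(rho_opt has_real_derivative
           (rho_opt b)\<^sup>2 / (((rho_opt b)\<^sup>2 + 1) * ln ((rho_opt b)\<^sup>2 - 1))) (at b)"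
proof -
  define r where "r = rho_opt b"
  have r: "sqrt 2 < r" "critical_b r = b"
    using assms rho_opt_gt_sqrt2 critical_b_rho_opt by (simp_all add: r_def)
  have "isCont rho_opt (critical_b r)"
  proof (rule isCont_inverse_function2[of "(sqrt 2 + r) / 2" r "r + 1"])
    fix z assume "(sqrt 2 + r) / 2 \<le> z" "z \<le> r + 1"
    with r have "sqrt 2 < z" by argo
    moreover from this one_less_sqrt2 have "1 < z" by linarith
    ultimately show "rho_opt (critical_b z) = z" "isCont critical_b z"
      by (simp_all add: rho_opt_critical_b DERIV_isCont[OF critical_b_has_derivative])
  qed (use r in auto)
  moreover have "DERIV critical_b (rho_opt b) :> (r\<^sup>2 + 1) * ln (r\<^sup>2 - 1) / r\<^sup>2"
    using r one_less_sqrt2 unfolding r_def by (intro critical_b_has_derivative) argo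
  moreover have "(r\<^sup>2 + 1) * ln (r\<^sup>2 - 1) / r\<^sup>2 \<noteq> 0"
    using critical_b_derivative_pos[OF r(1)] by linarith
  ultimately have "(rho_opt has_real_derivative inverse ((r\<^sup>2 + 1) * ln (r\<^sup>2 - 1) / r\<^sup>2)) (at b)"
    using assms critical_b_rho_opt r(2)
    by (intro DERIV_inverse_function[where a = "- 2 * sqrt 2" and b = "b + 1"]) auto
  then show ?thesis by (simp add: r_def)
qed

lemma lobj_arg_pos:
  fixes s b :: real
  assumes "0 < s" "0 \<le> b"
  shows "0 < (s\<^sup>2 + b * s + 1) / exp 1"
  using assms by (simp add: add_nonneg_pos)

lemma lobj_eq_exp_W0:
  assumes "0 < s" "0 \<le> b"
  shows "lobj b s = exp (W0 ((s\<^sup>2 + b * s + 1) / exp 1)) / s"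
proof -
  define x where "x = (s\<^sup>2 + b * s + 1) / exp 1"
  have "0 < x"
    using lobj_arg_pos[OF assms] by (simp add: x_def)
  have "lobj b s = x / W0 x / s"
    unfolding lobj_def x_def[symmetric] by (simp add: mult.commute)
  with divide_W0_eq_exp[OF \<open>0 < x\<close>] show ?thesis by (simp add: x_def)
qed

lemma lobj_critical_b:
  assumes "sqrt 2 < r" "0 \<le> critical_b r"
  shows "lobj (critical_b r) r = (r\<^sup>2 - 1) / (exp 1 * r)"
proof -
  define u where "u = r\<^sup>2 - 1"
  have r: "0 < r" using assms(1) one_less_sqrt2 by linarith
  have u: "1 < u" using two_less_square_if_sqrt2_less[OF assms(1)] by (simp add: u_def)
  have e: "exp (ln u - 1) = u / exp 1"
    using u by (simp add: exp_diff)
  have "(r\<^sup>2 + critical_b r * r + 1) / exp 1 = (ln u - 1) * exp (ln u - 1)"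
    using critical_b_times[OF r] unfolding e by (simp add: u_def field_simps)
  then have "W0 ((r\<^sup>2 + critical_b r * r + 1) / exp 1) = ln u - 1"
    using u by (simp add: W0_of_xexp)
  then show ?thesis
    unfolding lobj_eq_exp_W0[OF r assms(2)] by (simp add: e flip: u_def)
qed

lemma lobj_critical_b_less:
  assumes "sqrt 2 < r" "0 \<le> critical_b r" "0 < s" "s \<noteq> r"
  shows "lobj (critical_b r) r < lobj (critical_b r) s"
proof -
  define b u q where "b = critical_b r" and "u = r\<^sup>2 - 1" and "q = s / r"
  define x where "x = (s\<^sup>2 + b * s + 1) / exp 1"
  define t where "t = u * q / exp 1"
  have r: "0 < r" using assms(1) one_less_sqrt2 by linarith
  have u: "1 < u" using two_less_square_if_sqrt2_less[OF assms(1)] by (simp add: u_def)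
  have q: "0 < q" "q \<noteq> 1" using r assms(3,4) by (auto simp: q_def)
  have t: "0 < t" using u q by (simp add: t_def)
  have "ln q < q - 1"
    using q ln_le_minus_one[of q] ln_eq_minus_one[of q] by fastforce
  then have "u * q * ln q < u * q * (q - 1)"
    using u q by simp
  moreover have "exp 1 * (x - t * ln t) = (q - 1) * (r\<^sup>2 * q - 1) - u * q * ln q"
  proof -
    have ln_t: "ln t = ln u + ln q - 1"
      using u q by (simp add: t_def ln_mult ln_div)
    have b: "b = (u * ln u - 2 * r\<^sup>2) / r"
      by (simp add: b_def u_def critical_b_def)
    have s: "s = r * q"
      using r by (simp add: q_def)
    show ?thesis
      unfolding ln_t unfolding x_def t_def b s using r by (simp add: u_def field_simps power2_eq_square)
  qed
  moreover have "(q - 1) * (r\<^sup>2 * q - 1) - u * q * (q - 1) = (q - 1)\<^sup>2"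
    by (simp add: u_def algebra_simps power2_eq_square)
  ultimately have "0 < exp 1 * (x - t * ln t)"
    using zero_le_power2[of "q - 1"] by linarith
  then have "ln t * exp (ln t) < x"
    using t by (simp add: zero_less_mult_iff mult.commute)
  moreover have "- exp (-1) < x"
    using lobj_arg_pos[OF assms(3,2)] exp_gt_zero[of "-1"] unfolding x_def b_def by linarith
  ultimately have "ln t < W0 x"
    by (rule less_W0I[rotated])
  then have "t < exp (W0 x)"
    using t by (metis exp_less_mono exp_ln)
  then have "t / s < exp (W0 x) / s"
    using assms(3) by (simp add: divide_strict_right_mono)
  moreover have "t / s = (r\<^sup>2 - 1) / (exp 1 * r)"
    using r assms(3) by (simp add: t_def u_def q_def)
  ultimately show ?thesis
    unfolding lobj_critical_b[OF assms(1,2)] lobj_eq_exp_W0[OF assms(3,2)] by (simp add: x_def b_def)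
qed

lemma
  shows rho0_gt_sqrt2: "sqrt 2 < rho0" and critical_b_rho0: "critical_b rho0 = 0"
proof -
  define v where "v = W0 (2 / (exp 1)\<^sup>2)"
  define E where "E = exp (v + 2)"
  have "0 < 2 / (exp 1 :: real)\<^sup>2" by simp
  then have "- exp (-1) < 2 / (exp 1 :: real)\<^sup>2"
    using exp_gt_zero[of "-1"] by linarith
  then have v: "0 < v" "v * exp v = 2 / (exp 1)\<^sup>2"
    using W0_pos W0_times_exp by (simp_all add: v_def)
  then have "1 < E" by (simp add: E_def)
  then have rho0_sq: "rho0\<^sup>2 = 1 + E"
    by (simp add: rho0_def E_def v_def)
  show "sqrt 2 < rho0"
    using \<open>1 < E\<close> by (simp add: rho0_def E_def v_def)
  have "exp (2::real) = (exp 1)\<^sup>2"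
    by (metis exp_add one_add_one power2_eq_square)
  then have "v * E = 2"
    using v by (simp add: E_def exp_add field_simps)
  have "0 < rho0"
    using \<open>sqrt 2 < rho0\<close> one_less_sqrt2 by linarith
  then have "critical_b rho0 * rho0 = E * ln E - 2 * (1 + E)"
    using critical_b_times[of rho0] by (simp add: rho0_sq)
  also have "\<dots> = v * E - 2"
    by (simp add: E_def algebra_simps)
  finally show "critical_b rho0 = 0"
    using \<open>v * E = 2\<close> \<open>0 < rho0\<close> by simp
qed

lemma critical_b_ode_rhs:
  assumes "sqrt 2 < r"
  shows "r\<^sup>2 / ((r\<^sup>2 + 1) * ln (r\<^sup>2 - 1)) = r / (2 * r + critical_b r) * (1 - 2 / (r\<^sup>2 + 1))"
proof -
  define u where "u = r\<^sup>2 - 1"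
  define L where "L = ln u"
  have r: "0 < r" using assms one_less_sqrt2 by linarith
  have u: "1 < u" using two_less_square_if_sqrt2_less[OF assms] by (simp add: u_def)
  then have L: "0 < L" by (simp add: L_def)
  have "0 < r\<^sup>2 + 1" using zero_le_power2[of r] by linarith
  have A: "2 * r + critical_b r = u * L / r"
    using critical_b_times[OF r] r by (simp add: u_def L_def field_simps power2_eq_square)
  have B: "1 - 2 / (r\<^sup>2 + 1) = u / (r\<^sup>2 + 1)"
    using \<open>0 < r\<^sup>2 + 1\<close> by (simp add: u_def field_simps)
  have "r / (2 * r + critical_b r) * (1 - 2 / (r\<^sup>2 + 1)) = (u * r\<^sup>2) / (u * ((r\<^sup>2 + 1) * L))"
    unfolding A B by (simp add: power2_eq_square ac_simps)
  also have "\<dots> = r\<^sup>2 / ((r\<^sup>2 + 1) * L)"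
    using u by (intro mult_divide_mult_cancel_left) simp
  finally show ?thesis
    by (simp add: L_def u_def)
qed

lemma ode_rhs_pos:
  fixes r b :: real
  assumes "1 < r" "0 \<le> b"
  shows "0 < r / (2 * r + b) * (1 - 2 / (r\<^sup>2 + 1))"
proof -
  have factor: "0 < r / (2 * r + b)" using assms by simp
  have "2 < r\<^sup>2 + 1" using assms(1) one_less_power[of r 2] by simp
  then have "0 < 1 - 2 / (r\<^sup>2 + 1)" by simp
  with factor show ?thesis by (rule mult_pos_pos)
qed

lemma critical_b_along_ode_solution:
  assumes ode: "\<forall>b\<ge>0. sqrt 2 < \<sigma> b \<and>
      (\<sigma> has_real_derivative (\<sigma> b)\<^sup>2 / (((\<sigma> b)\<^sup>2 + 1) * ln ((\<sigma> b)\<^sup>2 - 1))) (at b within {0..})"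
    and "0 \<le> b"
  shows "critical_b (\<sigma> b) = critical_b (\<sigma> 0) + b"
proof -
  have "((\<lambda>b. critical_b (\<sigma> b) - b) has_real_derivative 0) (at b within {0..})" if "0 \<le> b" for b
  proof -
    define r where "r = \<sigma> b"
    have r: "sqrt 2 < r" using ode that by (simp add: r_def)
    then have "1 < r" using one_less_sqrt2 by linarith
    have "0 < (r\<^sup>2 + 1) * ln (r\<^sup>2 - 1) / r\<^sup>2"
      by (rule critical_b_derivative_pos[OF r])
    then have inverse: "(r\<^sup>2 + 1) * ln (r\<^sup>2 - 1) / r\<^sup>2 * (r\<^sup>2 / ((r\<^sup>2 + 1) * ln (r\<^sup>2 - 1))) = 1"
      by (metis inverse_divide right_inverse less_irrefl)
    have "DERIV critical_b (\<sigma> b) :> (r\<^sup>2 + 1) * ln (r\<^sup>2 - 1) / r\<^sup>2"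
      using critical_b_has_derivative[OF \<open>1 < r\<close>] by (simp add: r_def)
    moreover have "(\<sigma> has_real_derivative r\<^sup>2 / ((r\<^sup>2 + 1) * ln (r\<^sup>2 - 1))) (at b within {0..})"
      using ode that by (simp add: r_def)
    ultimately have "((\<lambda>b. critical_b (\<sigma> b)) has_real_derivative 1) (at b within {0..})"
      by (metis DERIV_chain2 inverse)
    from DERIV_diff[OF this DERIV_ident] show ?thesis
      by simp
  qed
  then obtain c where c: "\<forall>b\<in>{0..}. critical_b (\<sigma> b) - b = c"
    using has_field_derivative_zero_constant[OF convex_real_interval(1)] by blast
  have "critical_b (\<sigma> b) - b = c" "critical_b (\<sigma> 0) - 0 = c"
    by (rule c[THEN bspec], simp add: assms(2))+
  then show ?thesis by simp
qed

lemma square_minus_one_div_less: "0 < r \<Longrightarrow> (r\<^sup>2 - 1) / (exp 1 * r) < r / exp (1::real)"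
  by (simp add: field_simps power2_eq_square)

lemma unique_min_rho_opt:
  assumes "0 \<le> b"
  shows "unique_min_above_sqrt2 (lobj b) (rho_opt b)"
proof -
  from minus_two_sqrt2_less[OF assms]
  have r: "sqrt 2 < rho_opt b" and b: "critical_b (rho_opt b) = b"
    by (rule rho_opt_gt_sqrt2, rule critical_b_rho_opt)
  have "lobj b (rho_opt b) < lobj b s" if "sqrt 2 < s" "s \<noteq> rho_opt b" for s
  proof -
    have "0 < s" using that(1) one_less_sqrt2 by linarith
    with lobj_critical_b_less[OF r _ _ that(2)] b assms show ?thesis by simp
  qed
  with r show ?thesis unfolding unique_min_above_sqrt2_def by blast
qed

lemma ode_solution_eq_rho_opt:
  assumes "\<sigma> 0 = rho0"
    and ode: "\<forall>b\<ge>0. sqrt 2 < \<sigma> b \<and>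
      (\<sigma> has_real_derivative (\<sigma> b)\<^sup>2 / (((\<sigma> b)\<^sup>2 + 1) * ln ((\<sigma> b)\<^sup>2 - 1))) (at b within {0..})"
    and "0 \<le> b"
  shows "\<sigma> b = rho_opt b"
proof -
  have "critical_b (\<sigma> b) = b"
    using critical_b_along_ode_solution[OF ode assms(3)] assms(1) by (simp add: critical_b_rho0)
  moreover have "sqrt 2 < \<sigma> b" using ode assms(3) by simp
  ultimately show ?thesis by (metis rho_opt_critical_b)
qed

theorem lemmaG2:
  shows "unique_min_above_sqrt2 (lobj 0) rho0 \<and>
    (\<exists>\<rho> :: real \<Rightarrow> real.
       \<rho> 0 = rho0 \<and>
       (\<forall>b\<ge>0.
          unique_min_above_sqrt2 (lobj b) (\<rho> b) \<and>
          (\<rho> has_real_derivative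
             ((\<rho> b)^2 / (((\<rho> b)^2 + 1) * ln ((\<rho> b)^2 - 1)))) (at b within {0..}) \<and>
          (\<rho> b)^2 / (((\<rho> b)^2 + 1) * ln ((\<rho> b)^2 - 1))
             = \<rho> b / (2 * \<rho> b + b) * (1 - 2 / ((\<rho> b)^2 + 1)) \<and>
          \<rho> b / (2 * \<rho> b + b) * (1 - 2 / ((\<rho> b)^2 + 1)) > 0 \<and>
          lobj b (\<rho> b) = ((\<rho> b)^2 - 1) / (exp 1 * \<rho> b) \<and>
          ((\<rho> b)^2 - 1) / (exp 1 * \<rho> b) < \<rho> b / exp 1) \<and>
       (\<forall>\<sigma> :: real \<Rightarrow> real.
          \<sigma> 0 = rho0 \<and>
          (\<forall>b\<ge>0. \<sigma> b > sqrt 2 \<and>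
             (\<sigma> has_real_derivative
                ((\<sigma> b)^2 / (((\<sigma> b)^2 + 1) * ln ((\<sigma> b)^2 - 1)))) (at b within {0..}))
          \<longrightarrow> (\<forall>b\<ge>0. \<sigma> b = \<rho> b)))"
proof -
  have rho_opt: "sqrt 2 < rho_opt b" "critical_b (rho_opt b) = b" if "0 \<le> b" for b
    using minus_two_sqrt2_less[OF that] by (rule rho_opt_gt_sqrt2, rule critical_b_rho_opt)
  have rho_opt_gt_1: "1 < rho_opt b" if "0 \<le> b" for b
    using rho_opt(1)[OF that] one_less_sqrt2 by linarith
  have rho_opt_0: "rho_opt 0 = rho0"
    using rho_opt_critical_b[OF rho0_gt_sqrt2] by (simp add: critical_b_rho0)
  show ?thesis
    apply (intro conjI exI[of _ rho_opt] allI impI)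
    subgoal using unique_min_rho_opt[of 0] by (simp add: rho_opt_0)
    subgoal by (fact rho_opt_0)
    subgoal by (rule unique_min_rho_opt)
    subgoal by (rule has_field_derivative_at_within[OF rho_opt_has_derivative[OF minus_two_sqrt2_less]])
    subgoal for b using critical_b_ode_rhs[OF rho_opt(1)] rho_opt(2) by simp
    subgoal for b using ode_rhs_pos[OF rho_opt_gt_1] by simp
    subgoal for b using lobj_critical_b[OF rho_opt(1)] rho_opt(2) by simp
    subgoal for b using rho_opt_gt_1[of b] by (intro square_minus_one_div_less) simp
    subgoal using ode_solution_eq_rho_opt by blast
    done
qed

end
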